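(* Every set strongly star Lindelöf space of cardinality less than $\mathfrak d$ is set strongly star Menger.
   Context: For a family $\mathcal U$ of subsets of $X$ and $A\subseteq X$, $st(A,\mathcal U)=\bigcup\{U\in\mathcal U: U\cap A\neq\emptyset\}$. $X$ is set strongly star Lindelöf if for every nonempty $A\subseteq X$ and every family $\mathcal U$ of open subsets with $\overline A\subseteq\bigcup\mathcal U$ there is a countable $F\subseteq\overline A$ with $A\subseteq st(F,\mathcal U)$. $X$ is set strongly star Menger if for every nonempty $A\subseteq X$ and every sequence $(\mathcal U_n:n\in\omega)$ of families of open sets with $\overline A\subseteq\bigcup\mathcal U_n$ for all $n$, there are finite $F_n\subseteq\overline A$ with $A\subseteq\bigcup_n st(F_n,\mathcal U_n)$. $\mathfrak d$ is the minimal cardinality of a cofinal subset of $(\omega^\omega,\leq^* )$. *)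

theory Defs
  imports "HOL-Analysis.Analysis" "HOL-Library.Equipollence"
begin

definition star :: "'a set \<Rightarrow> 'a set set \<Rightarrow> 'a set" where
  "star A \<U> = \<Union>{U \<in> \<U>. U \<inter> A \<noteq> {}}"

definition set_strongly_star_Lindelof :: "'a topology \<Rightarrow> bool" where
  "set_strongly_star_Lindelof X \<longleftrightarrow>
     (\<forall>A \<U>. A \<noteq> {} \<and> A \<subseteq> topspace X \<and> (\<forall>U\<in>\<U>. openin X U)
        \<and> X closure_of A \<subseteq> \<Union>\<U> \<longrightarrow>
        (\<exists>F. countable F \<and> F \<subseteq> X closure_of A \<and> A \<subseteq> star F \<U>))"

definition set_strongly_star_Menger :: "'a topology \<Rightarrow> bool" where
  "set_strongly_star_Menger X \<longleftrightarrow>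
     (\<forall>A (\<U> :: nat \<Rightarrow> 'a set set). A \<noteq> {} \<and> A \<subseteq> topspace X
        \<and> (\<forall>n. (\<forall>U\<in>\<U> n. openin X U) \<and> X closure_of A \<subseteq> \<Union>(\<U> n)) \<longrightarrow>
        (\<exists>F :: nat \<Rightarrow> 'a set. (\<forall>n. finite (F n) \<and> F n \<subseteq> X closure_of A)
           \<and> A \<subseteq> (\<Union>n. star (F n) (\<U> n))))"

definition le_star :: "(nat \<Rightarrow> nat) \<Rightarrow> (nat \<Rightarrow> nat) \<Rightarrow> bool" where
  "le_star f g \<longleftrightarrow> (\<forall>\<^sub>F n in sequentially. f n \<le> g n)"

definition dominating :: "(nat \<Rightarrow> nat) set \<Rightarrow> bool" where
  "dominating D \<longleftrightarrow> (\<forall>g. \<exists>f\<in>D. le_star g f)"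

text \<open>A set has cardinality less than \<open>\<dd>\<close> (the dominating number) iff it is
  strictly smaller than every cofinal (dominating) family, since \<open>\<dd>\<close> is the
  minimum of the cardinalities of such families.\<close>
definition less_than_dfrak :: "'a set \<Rightarrow> bool" where
  "less_than_dfrak S \<longleftrightarrow> (\<forall>D. dominating D \<longrightarrow> S \<prec> D)"

end

theory Submission
  imports Defs
begin

text \<open>Apply the Lindelof property to each cover \<open>\<U> n\<close> to get countable sets
  \<open>F n = {e n 0, e n 1, \<dots>}\<close> whose stars cover \<open>A\<close>, and let \<open>f\<^sub>a n\<close> be an index with
  \<open>a \<in> st({e n (f\<^sub>a n)}, \<U> n)\<close>. The family \<open>{f\<^sub>a : a \<in> A}\<close> has fewer than \<open>\<dd>\<close> members,
  so some \<open>g\<close> is not dominated by any \<open>f\<^sub>a\<close>: for every \<open>a\<close> there is \<open>n\<close> with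
  \<open>f\<^sub>a n < g n\<close>. Hence the finite sets \<open>{e n k : k \<le> g n}\<close> witness the Menger property.\<close>

lemma star_image: "star (e ` K) \<U> = (\<Union>k\<in>K. star {e k} \<U>)"
  unfolding star_def by blast

lemma star_from_nat_into:
  assumes "countable F" and "F \<noteq> {}"
  shows "star F \<U> = (\<Union>k. star {from_nat_into F k} \<U>)"
  using star_image[of "from_nat_into F" UNIV] range_from_nat_into[OF assms(2,1)] by simp

lemma less_than_dfrak_lepoll_not_dominating:
  assumes "less_than_dfrak S" and "D \<lesssim> S"
  shows "\<not> dominating D"
proof
  assume "dominating D"
  with assms(1) have "S \<prec> D"
    unfolding less_than_dfrak_def by blast
  with assms(2) show False
    using lesspoll_trans2 by blast
qed

lemma not_dominating_imp_exceeds: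
  assumes "\<not> dominating D"
  obtains g where "\<And>f. f \<in> D \<Longrightarrow> \<exists>n. f n < g n"
proof -
  obtain g where undominated: "\<And>f. f \<in> D \<Longrightarrow> \<not> le_star g f"
    using assms unfolding dominating_def by blast
  have "\<exists>n. f n < g n" if "f \<in> D" for f
  proof (rule ccontr)
    assume "\<nexists>n. f n < g n"
    then have "le_star g f"
      unfolding le_star_def by (simp add: not_less always_eventually)
    with undominated \<open>f \<in> D\<close> show False by blast
  qed
  then show thesis using that by blast
qed

lemma countable_stars_imp_finite_stars:
  fixes F :: "nat \<Rightarrow> 'a set" and \<U> :: "nat \<Rightarrow> 'a set set"
  assumes countable: "\<And>n. countable (F n)"
    and covers: "\<And>n. A \<subseteq> star (F n) (\<U> n)"
    and small: "less_than_dfrak S" and "A \<subseteq> S"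
  obtains G where "\<And>n. finite (G n)" "\<And>n. G n \<subseteq> F n" "A \<subseteq> (\<Union>n. star (G n) (\<U> n))"
proof (cases "A = {}")
  case True
  then show thesis by (intro that[of "\<lambda>_. {}"]) auto
next
  case False
  then have nonempty: "F n \<noteq> {}" for n
    using covers[of n] unfolding star_def by blast
  define e where "e n = from_nat_into (F n)" for n
  have index_exists: "\<exists>k. a \<in> star {e n k} (\<U> n)" if "a \<in> A" for a n
    using covers[of n] that star_from_nat_into[OF countable nonempty] unfolding e_def by blast
  define f where "f a n = (SOME k. a \<in> star {e n k} (\<U> n))" for a n
  have f: "a \<in> star {e n (f a n)} (\<U> n)" if "a \<in> A" for a n
    unfolding f_def using someI_ex[OF index_exists[OF that]] .
  have "f ` A \<lesssim> S"
    using lepoll_trans[OF image_lepoll subset_imp_lepoll[OF \<open>A \<subseteq> S\<close>]] .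
  then have "\<not> dominating (f ` A)"
    by (rule less_than_dfrak_lepoll_not_dominating[OF small])
  then obtain g where "\<And>h. h \<in> f ` A \<Longrightarrow> \<exists>n. h n < g n"
    using not_dominating_imp_exceeds by blast
  then have g: "\<And>a. a \<in> A \<Longrightarrow> \<exists>n. f a n < g n"
    by blast
  define G where "G n = e n ` {..g n}" for n
  have "A \<subseteq> (\<Union>n. star (G n) (\<U> n))"
  proof
    fix a assume "a \<in> A"
    with g obtain n where "f a n < g n" by blast
    then have "a \<in> star (G n) (\<U> n)"
      unfolding G_def star_image using f[OF \<open>a \<in> A\<close>] by (intro UN_I[of "f a n"]) auto
    then show "a \<in> (\<Union>n. star (G n) (\<U> n))" by blast
  qed
  moreover have "finite (G n) \<and> G n \<subseteq> F n" for n
    using from_nat_into[OF nonempty] unfolding G_def e_def by auto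
  ultimately show thesis by (intro that[of G]) auto
qed

lemma set_strongly_star_LindelofD:
  assumes "set_strongly_star_Lindelof X" and "A \<noteq> {}" and "A \<subseteq> topspace X"
    and "\<forall>U\<in>\<U>. openin X U" and "X closure_of A \<subseteq> \<Union>\<U>"
  shows "\<exists>F. countable F \<and> F \<subseteq> X closure_of A \<and> A \<subseteq> star F \<U>"
  using assms(1)[unfolded set_strongly_star_Lindelof_def, rule_format, of A \<U>] assms(2-5)
  by blast

theorem proposition2p6:
  fixes X :: "'a topology"
  assumes "set_strongly_star_Lindelof X"
    and "less_than_dfrak (topspace X)"
  shows "set_strongly_star_Menger X"
  unfolding set_strongly_star_Menger_def
proof (intro allI impI, elim conjE)
  fix A and \<U> :: "nat \<Rightarrow> 'a set set"
  assume "A \<noteq> {}" and "A \<subseteq> topspace X"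
    and covers: "\<forall>n. (\<forall>U\<in>\<U> n. openin X U) \<and> X closure_of A \<subseteq> \<Union>(\<U> n)"
  have "\<forall>n. \<exists>F. countable F \<and> F \<subseteq> X closure_of A \<and> A \<subseteq> star F (\<U> n)"
    using set_strongly_star_LindelofD[OF assms(1) \<open>A \<noteq> {}\<close> \<open>A \<subseteq> topspace X\<close>] covers
    by simp
  then obtain F where "\<forall>n. countable (F n) \<and> F n \<subseteq> X closure_of A \<and> A \<subseteq> star (F n) (\<U> n)"
    by (auto dest: choice)
  then have F: "\<And>n. countable (F n)" "\<And>n. F n \<subseteq> X closure_of A"
    "\<And>n. A \<subseteq> star (F n) (\<U> n)"
    by simp_all
  obtain G where "\<And>n. finite (G n)" "\<And>n. G n \<subseteq> F n" "A \<subseteq> (\<Union>n. star (G n) (\<U> n))"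
    using countable_stars_imp_finite_stars[where F = F and \<U> = \<U>, OF F(1,3) assms(2)]
      \<open>A \<subseteq> topspace X\<close> by blast
  with F(2) show "\<exists>G. (\<forall>n. finite (G n) \<and> G n \<subseteq> X closure_of A)
      \<and> A \<subseteq> (\<Union>n. star (G n) (\<U> n))"
    by blast
qed

end
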